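(* Let $W_n$ ($n\ge4$) be the wheel graph (a cycle on $n-1$ vertices plus a vertex adjacent to all of them) with any finite initial configuration, and let $u,v$ be adjacent vertices of degree $3$. For every integer $t\geq0$: (a) if $|c_t(u)-c_t(v)|<3$ then $|c_{t+1}(u)-c_{t+1}(v)|\leq 6$; (b) if $|c_t(u)-c_t(v)|\geq 3$ then $|c_{t+1}(u)-c_{t+1}(v)|\leq |c_t(u)-c_t(v)|$.
   Context: Diffusion process: for a configuration $c_t:V(G)\to\mathbb{Z}$, $c_{t+1}(w)=c_t(w)-|\{x\in N(w): c_t(w)>c_t(x)\}|+|\{x\in N(w): c_t(w)<c_t(x)\}|$ for all $w$ simultaneously. *)

theory Defs
  imports Main
begin

text \<open>A (simple, finite) graph is given by a vertex set V and a symmetric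
irreflexive adjacency predicate E. Configurations are maps from vertices to int.\<close>

definition nbrs :: "'a set \<Rightarrow> ('a \<Rightarrow> 'a \<Rightarrow> bool) \<Rightarrow> 'a \<Rightarrow> 'a set" where
  "nbrs V E w = {x \<in> V. E w x}"

definition degree :: "'a set \<Rightarrow> ('a \<Rightarrow> 'a \<Rightarrow> bool) \<Rightarrow> 'a \<Rightarrow> nat" where
  "degree V E w = card (nbrs V E w)"

definition diffusion_step :: "'a set \<Rightarrow> ('a \<Rightarrow> 'a \<Rightarrow> bool) \<Rightarrow> ('a \<Rightarrow> int) \<Rightarrow> ('a \<Rightarrow> int)" where
  "diffusion_step V E c = (\<lambda>w. c w
      - int (card {x \<in> nbrs V E w. c w > c x})
      + int (card {x \<in> nbrs V E w. c w < c x}))"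

definition diffusion :: "'a set \<Rightarrow> ('a \<Rightarrow> 'a \<Rightarrow> bool) \<Rightarrow> ('a \<Rightarrow> int) \<Rightarrow> nat \<Rightarrow> ('a \<Rightarrow> int)" where
  "diffusion V E c0 t = (diffusion_step V E ^^ t) c0"

text \<open>Wheel graph W_n on vertices {0..<n}: vertex 0 is the hub, adjacent to all
  others; vertices 1..n-1 form a cycle (i adjacent to i+1, and n-1 adjacent to 1).\<close>
definition wheel_V :: "nat \<Rightarrow> nat set" where
  "wheel_V n = {0..<n}"

definition wheel_adj :: "nat \<Rightarrow> nat \<Rightarrow> nat \<Rightarrow> bool" where
  "wheel_adj n x y \<longleftrightarrow> x < n \<and> y < n \<and> x \<noteq> y \<and>
     (x = 0 \<or> y = 0 \<or> x mod (n - 1) + 1 = y \<or> y mod (n - 1) + 1 = x)"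

end

theory Submission
  imports Defs
begin

text \<open>At a vertex of degree 3 the step adds one sign term per neighbour. For adjacent
  u, v with a common neighbour w, the mutual terms pull c u and c v together by 2, the
  terms of w move them towards each other (or not at all), and only the private neighbours
  can push them apart, by at most 2. Hence a gap of at least 3 cannot grow, and a gap
  below 3 grows to at most 6. In a wheel with at least four vertices any two adjacent
  vertices have a common neighbour.\<close>

lemma diffusion_step_eq_sum_sgn:
  assumes "finite (nbrs V E w)"
  shows "diffusion_step V E c w = c w + (\<Sum>x\<in>nbrs V E w. sgn (c x - c w))"
proof -
  have "(\<Sum>x\<in>nbrs V E w. sgn (c x - c w)) =
        (\<Sum>x\<in>nbrs V E w. of_bool (c w < c x) - of_bool (c w > c x))"
    by (rule sum.cong) (auto simp: sgn_if)
  also have "\<dots> = int (card {x \<in> nbrs V E w. c w < c x}) - int (card {x \<in> nbrs V E w. c w > c x})"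
    using assms by (simp add: sum_subtractf Int_def conj_commute)
  finally show ?thesis unfolding diffusion_step_def by simp
qed

lemma card_eq_3_obtain_third:
  assumes "finite N" "card N = 3" "v \<in> N" "w \<in> N" "v \<noteq> w"
  obtains x where "N = {v, w, x}" "x \<noteq> v" "x \<noteq> w"
proof -
  have "card (N - {v, w}) = 1" using assms by (simp add: card_Diff_subset)
  then obtain x where "N - {v, w} = {x}" by (auto simp: card_Suc_eq)
  then show ?thesis using that assms by auto
qed

lemma sgn_diff_common_term:
  fixes a b w :: int
  assumes "b \<le> a"
  shows "-2 \<le> sgn (w - a) - sgn (w - b)" and "sgn (w - a) - sgn (w - b) \<le> 0"
  using assms by (auto simp: sgn_if)

lemma sgn_step_gap_bound:
  fixes a b w x y :: int
  defines "d \<equiv> (a + sgn (b - a) + sgn (w - a) + sgn (x - a)) - (b + sgn (a - b) + sgn (w - b) + sgn (y - b))"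
  shows "(\<bar>a - b\<bar> < 3 \<longrightarrow> \<bar>d\<bar> \<le> 6) \<and> (\<bar>a - b\<bar> \<ge> 3 \<longrightarrow> \<bar>d\<bar> \<le> \<bar>a - b\<bar>)"
proof -
  have private_terms: "\<bar>sgn (x - a) - sgn (y - b)\<bar> \<le> 2"
    by (simp add: sgn_if)
  show ?thesis
  proof (cases "b \<le> a")
    case True
    then show ?thesis
      using sgn_diff_common_term[OF True, of w] private_terms unfolding d_def
      by (cases "a = b") (auto simp: sgn_if abs_le_iff abs_less_iff)
  next
    case False
    then show ?thesis
      using sgn_diff_common_term[of a b w] private_terms unfolding d_def
      by (auto simp: sgn_if abs_le_iff abs_less_iff)
  qed
qed

lemma diffusion_step_adjacent_degree_3_gap:
  fixes c :: "'a \<Rightarrow> int"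
  assumes "finite (nbrs V E u)" "finite (nbrs V E v)"
    and "degree V E u = 3" "degree V E v = 3"
    and "v \<in> nbrs V E u" "u \<in> nbrs V E v"
    and "w \<in> nbrs V E u" "w \<in> nbrs V E v"
    and "u \<noteq> v" "w \<noteq> u" "w \<noteq> v"
  defines "c' \<equiv> diffusion_step V E c"
  shows "(\<bar>c u - c v\<bar> < 3 \<longrightarrow> \<bar>c' u - c' v\<bar> \<le> 6) \<and>
         (\<bar>c u - c v\<bar> \<ge> 3 \<longrightarrow> \<bar>c' u - c' v\<bar> \<le> \<bar>c u - c v\<bar>)"
proof -
  obtain x where x: "nbrs V E u = {v, w, x}" "x \<noteq> v" "x \<noteq> w"
    using card_eq_3_obtain_third assms(1,3,5,7,11) unfolding degree_def by metis
  obtain y where y: "nbrs V E v = {u, w, y}" "y \<noteq> u" "y \<noteq> w"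
    using card_eq_3_obtain_third assms(2,4,6,8,10) unfolding degree_def by metis
  have "c' u = c u + sgn (c v - c u) + sgn (c w - c u) + sgn (c x - c u)"
    unfolding c'_def diffusion_step_eq_sum_sgn[OF assms(1)] x(1) using x(2,3) assms(11) by simp
  moreover have "c' v = c v + sgn (c u - c v) + sgn (c w - c v) + sgn (c y - c v)"
    unfolding c'_def diffusion_step_eq_sum_sgn[OF assms(2)] y(1) using y(2,3) assms(10) by simp
  ultimately show ?thesis
    using sgn_step_gap_bound[of "c u" "c v" "c w" "c x" "c y"] by (simp add: algebra_simps)
qed

lemma mem_nbrs_wheel_iff: "x \<in> nbrs (wheel_V n) (wheel_adj n) y \<longleftrightarrow> wheel_adj n y x"
  unfolding nbrs_def wheel_V_def wheel_adj_def by auto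

lemma finite_nbrs_wheel: "finite (nbrs (wheel_V n) (wheel_adj n) w)"
  unfolding nbrs_def wheel_V_def by auto

lemma wheel_adj_sym: "wheel_adj n x y \<longleftrightarrow> wheel_adj n y x"
  unfolding wheel_adj_def by auto

lemma wheel_adj_irrefl: "\<not> wheel_adj n x x"
  unfolding wheel_adj_def by auto

text \<open>A rim vertex and its successor on the rim are both adjacent to the hub; the successor
  differs from the vertex because the rim has at least three vertices.\<close>
lemma wheel_adj_common_neighbour:
  assumes "n \<ge> 4" "wheel_adj n u v"
  obtains w where "wheel_adj n u w" "wheel_adj n v w"
proof (cases "u = 0 \<or> v = 0")
  case False
  then have "wheel_adj n u 0" "wheel_adj n v 0"
    using assms(2) unfolding wheel_adj_def by auto
  then show ?thesis using that by blast
next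
  case True
  then obtain r where r: "{u, v} = {0, r}" "0 < r" "r < n"
    using assms(2) unfolding wheel_adj_def by auto
  define s where "s = r mod (n - 1) + 1"
  have "s < n \<and> s \<noteq> r"
  proof (cases "r = n - 1")
    case True
    then show ?thesis using assms(1) unfolding s_def by simp
  next
    case False
    then show ?thesis using r(3) unfolding s_def by simp
  qed
  then have "wheel_adj n 0 s" "wheel_adj n r s"
    using r(2,3) unfolding wheel_adj_def s_def by auto
  then show ?thesis using that r(1) by (auto simp: doubleton_eq_iff)
qed

theorem lemma8:
  fixes n :: nat and c0 :: "nat \<Rightarrow> int" and u v :: nat and t :: nat
  assumes "n \<ge> 4"
    and "u \<in> wheel_V n" and "v \<in> wheel_V n"
    and "wheel_adj n u v"
    and "degree (wheel_V n) (wheel_adj n) u = 3"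
    and "degree (wheel_V n) (wheel_adj n) v = 3"
  defines "c \<equiv> diffusion (wheel_V n) (wheel_adj n) c0"
  shows "(\<bar>c t u - c t v\<bar> < 3 \<longrightarrow> \<bar>c (Suc t) u - c (Suc t) v\<bar> \<le> 6) \<and>
         (\<bar>c t u - c t v\<bar> \<ge> 3 \<longrightarrow> \<bar>c (Suc t) u - c (Suc t) v\<bar> \<le> \<bar>c t u - c t v\<bar>)"
proof -
  let ?N = "nbrs (wheel_V n) (wheel_adj n)"
  obtain w where w: "wheel_adj n u w" "wheel_adj n v w"
    using wheel_adj_common_neighbour assms(1,4) by blast
  then have "v \<in> ?N u" "u \<in> ?N v" "w \<in> ?N u" "w \<in> ?N v" "u \<noteq> v" "w \<noteq> u" "w \<noteq> v"
    using assms(4) wheel_adj_irrefl wheel_adj_sym[of n] by (auto simp: mem_nbrs_wheel_iff)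
  moreover have "c (Suc t) = diffusion_step (wheel_V n) (wheel_adj n) (c t)"
    unfolding c_def diffusion_def by simp
  ultimately show ?thesis
    using diffusion_step_adjacent_degree_3_gap[OF finite_nbrs_wheel finite_nbrs_wheel assms(5,6)]
    by simp
qed

end
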